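(* Let $n>0$ and $c>0$ be constants and fix $x_0$ with $0<x_0<c$. Let $f\in C(\mathbb{R}_0^+\times\mathbb{R}_0^+,\mathbb{R}_0^+)$ be nondecreasing in its first variable for each fixed second variable, let $w\in C(\mathbb{R}_0^+,\mathbb{R}_0^+)$ be nondecreasing with $w(x)>0$ for $x>0$, and let $\alpha\in C^1(\mathbb{R}_0^+,\mathbb{R}_0^+)$ be nondecreasing with $\alpha(t)\le t$. If $u\in C(\mathbb{R}_0^+,\mathbb{R}_0^+)$ satisfies $$u^n(t)\le c+\int_0^{\alpha(t)}f(t,s)\,(u^n(s)+1)\ln(u^n(s)+1)\,w(u(s))\,ds\qquad\text{for all }t\ge0,$$ then there exists $\tau>0$ such that for all $t\in[0,\tau]$, $$\Psi(G(c))+\int_0^{\alpha(t)}f(t,s)\,ds\in\mathrm{Dom}(\Psi^{-1})$$ and $$u(t)\le\Big\{G^{-1}\Big(\Psi^{-1}\Big[\Psi(G(c))+\int_0^{\alpha(t)}f(t,s)\,ds\Big]\Big)\Big\}^{1/n},$$ where $G(x)=\int_{x_0}^x\frac{ds}{(s+1)\ln(s+1)}$ for $x\ge x_0$, whose inverse is $G^{-1}(y)=e^{e^{y}\ln(x_0+1)}-1$, and $\Psi(x)=\int_1^x\frac{ds}{w\big((e^{e^{s}\ln(x_0+1)}-1)^{1/n}\big)}$ for $x>0$.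
   Context: $\mathbb{R}_0^+=[0,\infty)$. $\Psi$ is strictly increasing on $(0,\infty)$, $\Psi^{-1}$ denotes its inverse, and $\mathrm{Dom}(\Psi^{-1})=\Psi((0,\infty))$. *)

theory Defs
  imports "HOL-Analysis.Analysis"
begin

definition oint :: "(real \<Rightarrow> real) \<Rightarrow> real \<Rightarrow> real \<Rightarrow> real" where
  "oint g a b = (if a \<le> b then integral {a..b} g else - integral {b..a} g)"

definition G :: "real \<Rightarrow> real \<Rightarrow> real" where
  "G x0 x = oint (\<lambda>s. 1 / ((s + 1) * ln (s + 1))) x0 x"

definition Ginv :: "real \<Rightarrow> real \<Rightarrow> real" where
  "Ginv x0 y = exp (exp y * ln (x0 + 1)) - 1"

definition Psi :: "real \<Rightarrow> (real \<Rightarrow> real) \<Rightarrow> real \<Rightarrow> real \<Rightarrow> real" where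
  "Psi n w x0 x = oint (\<lambda>s. 1 / w ((exp (exp s * ln (x0 + 1)) - 1) powr (1 / n))) 1 x"

definition Psi_inv :: "real \<Rightarrow> (real \<Rightarrow> real) \<Rightarrow> real \<Rightarrow> real \<Rightarrow> real" where
  "Psi_inv n w x0 = the_inv_into {0<..} (Psi n w x0)"

end

theory Submission
  imports Defs
begin

(* G has the closed form G(y) = ln ln (y+1) - ln ln (x0+1), inverted by Ginv, and Psi is a
   strictly increasing antiderivative of a positive continuous integrand; hence Psi o G is an
   antiderivative of 1 / ((z+1) ln(z+1) w(z^(1/n))) on (x0,oo).
   Fix a horizon T and let Z T t = c + int_0^alpha(t) f(T,s) phi(s) ds, where phi(s) is the
   factor (u^n+1) ln(u^n+1) w(u) of the hypothesis.  The hypothesis gives u(alpha t)^n <= Z T t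
   for t <= T, so the derivative of Z T is at most f(T, alpha t) alpha'(t) times
   (Z+1) ln(Z+1) w(Z^(1/n)); comparing with the antiderivative Psi o G yields
       Psi(G(Z T T)) <= Psi(G(c)) + int_0^alpha(T) f(T,s) ds.
   For small T the right-hand side lies in Psi([G c, G c + 1]), hence in the range of Psi on
   (0,oo); inverting Psi and G and using u(T)^n <= Z T T gives the claimed bound. *)

section \<open>The function G in closed form\<close>

definition G_closed :: "real \<Rightarrow> real \<Rightarrow> real" where
  "G_closed x0 y = ln (ln (y + 1)) - ln (ln (x0 + 1))"

lemma G_eq_G_closed:
  assumes "0 < x0" "x0 \<le> y"
  shows "G x0 y = G_closed x0 y"
proof -
  have "((\<lambda>s. 1 / ((s + 1) * ln (s + 1))) has_integral G_closed x0 y) {x0..y}"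
    unfolding G_closed_def
  proof (rule fundamental_theorem_of_calculus[OF assms(2)])
    fix x assume "x \<in> {x0..y}"
    hence "x > 0" using assms by auto
    hence "((\<lambda>s. ln (ln (s + 1))) has_real_derivative 1 / ((x + 1) * ln (x + 1))) (at x)"
      by (auto intro!: derivative_eq_intros simp: field_simps)
    thus "((\<lambda>s. ln (ln (s + 1))) has_vector_derivative 1 / ((x + 1) * ln (x + 1)))
            (at x within {x0..y})"
      by (simp add: has_real_derivative_iff_has_vector_derivative has_vector_derivative_at_within)
  qed
  thus ?thesis unfolding G_def oint_def using assms by (simp add: integral_unique)
qed

lemma Ginv_G_closed:
  assumes "0 < x0" "0 < z"
  shows "Ginv x0 (G_closed x0 z) = z"
proof -
  have "ln (z + 1) > 0" "ln (x0 + 1) > 0" using assms by auto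
  hence "exp (G_closed x0 z) = ln (z + 1) / ln (x0 + 1)"
    unfolding G_closed_def by (simp add: exp_diff)
  thus ?thesis unfolding Ginv_def using \<open>ln (x0 + 1) > 0\<close> assms by simp
qed

lemma G_closed_pos:
  assumes "0 < x0" "x0 < z"
  shows "G_closed x0 z > 0"
  using assms unfolding G_closed_def by simp

lemma Ginv_mono:
  assumes "0 < x0" "a \<le> b"
  shows "Ginv x0 a \<le> Ginv x0 b"
  using assms unfolding Ginv_def by (simp add: mult_right_mono)

lemma G_closed_deriv:
  assumes "0 < z"
  shows "DERIV (G_closed x0) z :> 1 / ((z + 1) * ln (z + 1))"
  unfolding G_closed_def using assms
  by (auto intro!: derivative_eq_intros simp: field_simps)

section \<open>The function Psi\<close>

definition Psi_integrand :: "real \<Rightarrow> (real \<Rightarrow> real) \<Rightarrow> real \<Rightarrow> real \<Rightarrow> real" where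
  "Psi_integrand n w x0 s = 1 / w ((exp (exp s * ln (x0 + 1)) - 1) powr (1 / n))"

lemma Psi_integrand_arg_pos:
  fixes x0 s n :: real
  assumes "0 < x0"
  shows "(exp (exp s * ln (x0 + 1)) - 1) powr (1 / n) > 0"
proof -
  have "ln (x0 + 1) > 0" using assms by (simp add: ln_gt_zero)
  hence "exp s * ln (x0 + 1) > 0" by simp
  hence "exp (exp s * ln (x0 + 1)) - 1 > 0" by simp
  thus ?thesis by (simp only: powr_gt_zero)
qed

lemma Psi_integrand_pos:
  assumes "0 < x0" "\<And>x. x > 0 \<Longrightarrow> w x > 0"
  shows "Psi_integrand n w x0 s > 0"
  unfolding Psi_integrand_def using assms(2)[OF Psi_integrand_arg_pos[OF assms(1)]] by simp

lemma Psi_integrand_cont: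
  assumes "0 < x0" "\<And>x. x > 0 \<Longrightarrow> w x > 0" "continuous_on {0..} w"
  shows "continuous_on S (Psi_integrand n w x0)"
proof -
  have arg: "continuous_on S (\<lambda>s. (exp (exp s * ln (x0 + 1)) - 1) powr (1 / n))"
    using Psi_integrand_arg_pos[OF assms(1)] by (intro continuous_intros) auto
  have w_arg: "continuous_on S (\<lambda>s. w ((exp (exp s * ln (x0 + 1)) - 1) powr (1 / n)))"
    by (rule continuous_on_compose2[OF assms(3) arg])
       (auto intro!: less_imp_le[OF Psi_integrand_arg_pos[OF assms(1)]])
  have "w ((exp (exp s * ln (x0 + 1)) - 1) powr (1 / n)) \<noteq> 0" for s
    using assms(2)[OF Psi_integrand_arg_pos[OF assms(1)]] by (metis less_irrefl)
  thus ?thesis unfolding Psi_integrand_def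
    by (intro continuous_on_divide[OF continuous_on_const w_arg]) simp
qed

lemma Psi_integrand_G_closed:
  assumes "0 < x0" "0 < z"
  shows "Psi_integrand n w x0 (G_closed x0 z) = 1 / w (z powr (1 / n))"
  using Ginv_G_closed[OF assms] unfolding Psi_integrand_def Ginv_def by simp

lemma Psi_deriv:
  assumes "0 < x0" "\<And>x. x > 0 \<Longrightarrow> w x > 0" "continuous_on {0..} w" "0 < x"
  shows "DERIV (Psi n w x0) x :> Psi_integrand n w x0 x"
proof -
  let ?h = "Psi_integrand n w x0"
  have int: "?h integrable_on {a..b}" for a b
    by (rule integrable_continuous_interval, rule Psi_integrand_cont[OF assms(1-3)])
  have split: "Psi n w x0 y = integral {0..y} ?h - integral {0..1} ?h" if "0 < y" for y
  proof (cases "1 \<le> y")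
    case True
    have "integral {0..1} ?h + integral {1..y} ?h = integral {0..y} ?h"
      by (rule Henstock_Kurzweil_Integration.integral_combine) (use True int in auto)
    then show ?thesis using True unfolding Psi_def oint_def Psi_integrand_def by simp
  next
    case False
    have "integral {0..y} ?h + integral {y..1} ?h = integral {0..1} ?h"
      by (rule Henstock_Kurzweil_Integration.integral_combine) (use False that int in auto)
    then show ?thesis using False unfolding Psi_def oint_def Psi_integrand_def by simp
  qed
  have "((\<lambda>y. integral {0..y} ?h) has_real_derivative ?h x) (at x within {0..x + 1})"
    by (rule integral_has_real_derivative)
       (use Psi_integrand_cont[OF assms(1-3)] assms(4) in auto)
  moreover have "at x within {0..x + 1} = at x"
    by (rule at_within_interior) (use assms(4) in simp)
  ultimately have "((\<lambda>y. integral {0..y} ?h - integral {0..1} ?h) has_real_derivative ?h x) (at x)"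
    by (auto intro!: derivative_eq_intros)
  thus ?thesis
    by (rule has_field_derivative_transform_within_open[where S="{0<..}"])
       (use assms(4) split in auto)
qed

lemma Psi_strict_mono:
  assumes "0 < x0" "\<And>x. x > 0 \<Longrightarrow> w x > 0" "continuous_on {0..} w" "0 < a" "a < b"
  shows "Psi n w x0 a < Psi n w x0 b"
proof (rule DERIV_pos_imp_increasing[OF assms(5)])
  fix x assume "a \<le> x" "x \<le> b"
  hence "0 < x" using assms(4) by simp
  have "DERIV (Psi n w x0) x :> Psi_integrand n w x0 x"
    by (rule Psi_deriv[OF assms(1-3) \<open>0 < x\<close>])
  moreover have "Psi_integrand n w x0 x > 0" by (rule Psi_integrand_pos[OF assms(1,2)])
  ultimately show "\<exists>y. DERIV (Psi n w x0) x :> y \<and> y > 0" by blast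
qed

lemma Psi_cont:
  assumes "0 < x0" "\<And>x. x > 0 \<Longrightarrow> w x > 0" "continuous_on {0..} w" "0 < a"
  shows "continuous_on {a..b} (Psi n w x0)"
  by (rule DERIV_continuous_on, rule has_field_derivative_at_within, rule Psi_deriv)
     (use assms in auto)

lemma Psi_inv_Psi:
  assumes "0 < x0" "\<And>x. x > 0 \<Longrightarrow> w x > 0" "continuous_on {0..} w" "0 < x"
  shows "Psi_inv n w x0 (Psi n w x0 x) = x"
proof -
  have "strict_mono_on {0<..} (Psi n w x0)"
  proof (rule strict_mono_onI)
    fix a b :: real assume "a \<in> {0<..}" "a < b"
    thus "Psi n w x0 a < Psi n w x0 b" by (intro Psi_strict_mono[OF assms(1-3)]) auto
  qed
  hence "inj_on (Psi n w x0) {0<..}" by (rule strict_mono_on_imp_inj_on)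
  thus ?thesis unfolding Psi_inv_def using assms(4) by (simp add: the_inv_into_f_f)
qed

text \<open>The composition Psi o G is an antiderivative of 1 / ((z+1) ln(z+1) w(z^(1/n)));
  this is the Bihari-type function along which the comparison is made.\<close>
lemma Psi_G_closed_deriv:
  assumes "0 < x0" "\<And>x. x > 0 \<Longrightarrow> w x > 0" "continuous_on {0..} w" "x0 < z"
  shows "DERIV (\<lambda>z. Psi n w x0 (G_closed x0 z)) z
           :> 1 / ((z + 1) * ln (z + 1) * w (z powr (1 / n)))"
proof -
  have z: "0 < z" using assms by simp
  have "DERIV (\<lambda>z. Psi n w x0 (G_closed x0 z)) z
          :> Psi_integrand n w x0 (G_closed x0 z) * (1 / ((z + 1) * ln (z + 1)))"
    by (rule DERIV_chain2[OF Psi_deriv[OF assms(1-3) G_closed_pos[OF assms(1,4)]]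
          G_closed_deriv[OF z]])
  thus ?thesis using Psi_integrand_G_closed[OF assms(1) z] by (simp add: mult.commute)
qed

lemma Psi_level_reached:
  assumes "0 < x0" "\<And>x. x > 0 \<Longrightarrow> w x > 0" "continuous_on {0..} w" "0 < g0"
    and "0 \<le> S" "S < Psi n w x0 (g0 + 1) - Psi n w x0 g0"
  obtains x where "0 < x" "Psi n w x0 x = Psi n w x0 g0 + S"
proof -
  obtain x where x: "g0 \<le> x" "Psi n w x0 x = Psi n w x0 g0 + S"
    using IVT'[of "Psi n w x0" g0 "Psi n w x0 g0 + S" "g0 + 1"] Psi_cont[OF assms(1-4)] assms(5,6)
    by auto
  show ?thesis by (rule that[of x]) (use x assms(4) in auto)
qed

lemma bound_by_inverse:
  assumes "0 < x0" "\<And>x. x > 0 \<Longrightarrow> w x > 0" "continuous_on {0..} w"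
    and "x0 < z" "0 < y" "Psi n w x0 (G_closed x0 z) \<le> Psi n w x0 y"
  shows "z \<le> Ginv x0 y"
proof -
  have "\<not> y < G_closed x0 z"
  proof
    assume "y < G_closed x0 z"
    with assms(1-3,5) have "Psi n w x0 y < Psi n w x0 (G_closed x0 z)"
      by (rule Psi_strict_mono)
    thus False using assms(6) by simp
  qed
  hence "Ginv x0 (G_closed x0 z) \<le> Ginv x0 y" by (intro Ginv_mono[OF assms(1)]) simp
  moreover have "Ginv x0 (G_closed x0 z) = z" by (rule Ginv_G_closed) (use assms in auto)
  ultimately show ?thesis by simp
qed

lemma powr_root_le:
  fixes n v z :: real
  assumes "n > 0" "v \<ge> 0" "v powr n \<le> z"
  shows "v \<le> z powr (1 / n)"
proof -
  have "v = (v powr n) powr (1 / n)" using assms by (simp add: powr_powr)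
  also have "\<dots> \<le> z powr (1 / n)" by (rule powr_mono2) (use assms in auto)
  finally show ?thesis .
qed

lemma mono_on_deriv_nonneg:
  fixes g :: "real \<Rightarrow> real"
  assumes mono: "mono_on S g" and t: "t \<in> interior S"
    and der: "(g has_real_derivative g') (at t within S)"
  shows "g' \<ge> 0"
proof (rule ccontr)
  assume "\<not> g' \<ge> 0"
  obtain e where e: "e > 0" "ball t e \<subseteq> S" using t by (meson mem_interior)
  have "DERIV g t :> g'" using der at_within_interior[OF t] by simp
  then obtain d where d: "d > 0" "\<And>h. h > 0 \<Longrightarrow> h < d \<Longrightarrow> g (t + h) < g t"
    using DERIV_neg_dec_right \<open>\<not> g' \<ge> 0\<close> by (meson not_le)
  define h where "h = min d e / 2"
  have "t + h \<in> ball t e" using d e by (simp add: h_def dist_real_def)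
  hence in_S: "t \<in> S" "t + h \<in> S" using e interior_subset t by auto
  have h: "0 < h" "h < d" using d e by (auto simp: h_def)
  hence "g t \<le> g (t + h)" using mono_onD[OF mono in_S] by simp
  moreover have "g (t + h) < g t" using d(2) h by simp
  ultimately show False by simp
qed

lemma integral_upper_chain:
  fixes g \<alpha> :: "real \<Rightarrow> real"
  assumes "continuous_on {a..b} g" "\<alpha> ` S \<subseteq> {a..b}" "t \<in> S"
    and "(\<alpha> has_real_derivative \<alpha>') (at t within S)"
  shows "((\<lambda>t. integral {a..\<alpha> t} g) has_real_derivative g (\<alpha> t) * \<alpha>') (at t within S)"
proof -
  have "((\<lambda>x. integral {a..x} g) has_real_derivative g (\<alpha> t)) (at (\<alpha> t) within {a..b})"
    by (rule integral_has_real_derivative) (use assms in auto)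
  hence "((\<lambda>x. integral {a..x} g) has_real_derivative g (\<alpha> t)) (at (\<alpha> t) within \<alpha> ` S)"
    by (rule DERIV_subset) (rule assms(2))
  from DERIV_image_chain[OF this assms(4)] show ?thesis by (simp add: o_def)
qed

text \<open>Comparison via an antiderivative: if K' = k and k(z t) z'(t) <= p(t) = F'(t),
  then K o z - F is nonincreasing.\<close>
lemma comparison_via_antiderivative:
  fixes z F K :: "real \<Rightarrow> real"
  assumes "a \<le> b"
    and z_der: "\<And>t. t \<in> {a..b} \<Longrightarrow> (z has_real_derivative z' t) (at t within {a..b})"
    and F_der: "\<And>t. t \<in> {a..b} \<Longrightarrow> (F has_real_derivative p t) (at t within {a..b})"
    and K_der: "\<And>t. t \<in> {a..b} \<Longrightarrow> (K has_real_derivative k (z t)) (at (z t))"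
    and slope: "\<And>t. t \<in> {a<..<b} \<Longrightarrow> k (z t) * z' t \<le> p t"
  shows "K (z b) \<le> K (z a) + F b - F a"
proof -
  define H where "H t = K (z t) - F t" for t
  have H_der: "(H has_real_derivative k (z t) * z' t - p t) (at t within {a..b})"
    if "t \<in> {a..b}" for t
    unfolding H_def
    by (rule DERIV_diff[OF DERIV_chain2[OF K_der[OF that] z_der[OF that]] F_der[OF that]])
  have "H b \<le> H a"
  proof (rule DERIV_nonpos_imp_decreasing_open[OF assms(1)])
    fix t assume t: "a < t" "t < b"
    have "at t within {a..b} = at t" by (rule at_within_interior) (use t in simp)
    thus "\<exists>y. DERIV H t :> y \<and> y \<le> 0"
      using H_der[of t] slope[of t] t by auto
  next
    show "continuous_on {a..b} H" using H_der by (rule DERIV_continuous_on)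
  qed
  thus ?thesis unfolding H_def by simp
qed

lemma integrand_le_level:
  fixes w :: "real \<Rightarrow> real"
  assumes "n > 0" "mono_on {0..} w" "\<And>x. x \<ge> 0 \<Longrightarrow> w x \<ge> 0" "v \<ge> 0" "v powr n \<le> z"
  shows "(v powr n + 1) * ln (v powr n + 1) * w v \<le> (z + 1) * ln (z + 1) * w (z powr (1 / n))"
proof -
  have "v \<le> z powr (1 / n)" by (rule powr_root_le) (use assms in auto)
  hence w_le: "w v \<le> w (z powr (1 / n))" by (intro mono_onD[OF assms(2)]) (use assms in auto)
  have pos: "0 < v powr n + 1" by (intro add_nonneg_pos) simp_all
  have le: "v powr n + 1 \<le> z + 1" using assms(5) by simp
  have ln_nonneg: "0 \<le> ln (v powr n + 1)" by simp
  have ln_le: "ln (v powr n + 1) \<le> ln (z + 1)" using pos le by simp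
  have "(v powr n + 1) * ln (v powr n + 1) \<le> (z + 1) * ln (z + 1)"
    by (rule mult_mono[OF le ln_le]) (use pos le ln_nonneg in linarith)+
  thus ?thesis
    by (rule mult_mono[OF _ w_le])
       (use pos le ln_nonneg order_trans[OF powr_ge_zero assms(5)] assms(3,4) in simp_all)
qed

section \<open>The comparison estimate\<close>

text \<open>The hypotheses of the corollary, with a chosen derivative \<alpha>' of \<alpha>.\<close>
locale bihari_setting =
  fixes n c x0 :: real
    and f :: "real \<Rightarrow> real \<Rightarrow> real"
    and w \<alpha> \<alpha>' u :: "real \<Rightarrow> real"
  assumes n_pos: "n > 0"
    and x0: "0 < x0" "x0 < c"
    and f_cont: "continuous_on ({0..} \<times> {0..}) (\<lambda>(t, s). f t s)"
    and f_nonneg: "\<And>t s. t \<ge> 0 \<Longrightarrow> s \<ge> 0 \<Longrightarrow> f t s \<ge> 0"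
    and f_mono: "\<And>s t1 t2. s \<ge> 0 \<Longrightarrow> 0 \<le> t1 \<Longrightarrow> t1 \<le> t2 \<Longrightarrow> f t1 s \<le> f t2 s"
    and w_cont: "continuous_on {0..} w"
    and w_nonneg: "\<And>x. x \<ge> 0 \<Longrightarrow> w x \<ge> 0"
    and w_mono: "mono_on {0..} w"
    and w_pos: "\<And>x. x > 0 \<Longrightarrow> w x > 0"
    and \<alpha>_der: "\<And>t. t \<ge> 0 \<Longrightarrow> (\<alpha> has_real_derivative \<alpha>' t) (at t within {0..})"
    and \<alpha>_nonneg: "\<And>t. t \<ge> 0 \<Longrightarrow> \<alpha> t \<ge> 0"
    and \<alpha>_mono: "mono_on {0..} \<alpha>"
    and \<alpha>_le: "\<And>t. t \<ge> 0 \<Longrightarrow> \<alpha> t \<le> t"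
    and u_cont: "continuous_on {0..} u"
    and u_nonneg: "\<And>t. t \<ge> 0 \<Longrightarrow> u t \<ge> 0"
    and ineq: "\<And>t. t \<ge> 0 \<Longrightarrow> u t powr n \<le> c + integral {0..\<alpha> t}
                 (\<lambda>s. f t s * (u s powr n + 1) * ln (u s powr n + 1) * w (u s))"
begin

definition phi :: "real \<Rightarrow> real" where
  "phi s = (u s powr n + 1) * ln (u s powr n + 1) * w (u s)"

definition Z :: "real \<Rightarrow> real \<Rightarrow> real" where
  "Z T t = c + integral {0..\<alpha> t} (\<lambda>s. f T s * phi s)"

lemma f_slice_cont: "t \<ge> 0 \<Longrightarrow> continuous_on {0..} (f t)"
  using continuous_on_compose2[OF f_cont continuous_on_Pair[OF continuous_on_const continuous_on_id]]
  by auto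

lemma phi_nonneg: "s \<ge> 0 \<Longrightarrow> phi s \<ge> 0"
  unfolding phi_def using u_nonneg w_nonneg by simp

lemma phi_cont: "continuous_on {0..} phi"
proof -
  have un: "continuous_on {0..} (\<lambda>s. u s powr n)"
    by (rule continuous_on_powr'[OF u_cont continuous_on_const]) (use u_nonneg n_pos in auto)
  have wu: "continuous_on {0..} (\<lambda>s. w (u s))"
    by (rule continuous_on_compose2[OF w_cont u_cont]) (use u_nonneg in auto)
  have "u s powr n + 1 > 0" for s by (simp add: add_nonneg_pos)
  hence ln_un: "continuous_on {0..} (\<lambda>s. ln (u s powr n + 1))"
    by (intro continuous_on_ln continuous_on_add[OF un continuous_on_const])
       (auto simp: less_imp_neq[symmetric])
  show ?thesis unfolding phi_def
    by (rule continuous_on_mult[OF continuous_on_mult[OF continuous_on_add[OF un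
          continuous_on_const] ln_un] wu])
qed

lemma weighted_cont: "T \<ge> 0 \<Longrightarrow> continuous_on {0..} (\<lambda>s. f T s * phi s)"
  by (rule continuous_on_mult[OF f_slice_cont phi_cont])

lemma weighted_integrable: "T \<ge> 0 \<Longrightarrow> (\<lambda>s. f T s * phi s) integrable_on {0..b}"
  by (rule integrable_continuous_interval, rule continuous_on_subset[OF weighted_cont]) auto

lemma Z_mono_time:
  assumes "T \<ge> 0" "0 \<le> t1" "t1 \<le> t2"
  shows "Z T t1 \<le> Z T t2"
proof -
  have "\<alpha> t1 \<le> \<alpha> t2" using assms by (auto intro: mono_onD[OF \<alpha>_mono])
  hence "integral {0..\<alpha> t1} (\<lambda>s. f T s * phi s) \<le> integral {0..\<alpha> t2} (\<lambda>s. f T s * phi s)"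
    using weighted_integrable[OF assms(1)] f_nonneg[OF assms(1)] phi_nonneg
    by (intro integral_subset_le) auto
  thus ?thesis unfolding Z_def by simp
qed

lemma Z_mono_horizon:
  assumes "0 \<le> T1" "T1 \<le> T2"
  shows "Z T1 t \<le> Z T2 t"
proof -
  have "integral {0..\<alpha> t} (\<lambda>s. f T1 s * phi s) \<le> integral {0..\<alpha> t} (\<lambda>s. f T2 s * phi s)"
  proof (rule integral_le[OF weighted_integrable weighted_integrable])
    fix s assume "s \<in> {0..\<alpha> t}"
    thus "f T1 s * phi s \<le> f T2 s * phi s"
      using assms phi_nonneg by (intro mult_right_mono f_mono) auto
  qed (use assms in auto)
  thus ?thesis unfolding Z_def by simp
qed

text \<open>Since \<alpha>(0) = 0, the comparison function starts at c and stays above it.\<close>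
lemma Z_ge_c:
  assumes "T \<ge> 0" "t \<ge> 0"
  shows "Z T t \<ge> c"
proof -
  have "\<alpha> 0 = 0" using \<alpha>_nonneg[of 0] \<alpha>_le[of 0] by simp
  hence "Z T 0 = c" unfolding Z_def by simp
  thus ?thesis using Z_mono_time[OF assms(1) order_refl assms(2)] by simp
qed

lemma hypothesis_Z: "t \<ge> 0 \<Longrightarrow> u t powr n \<le> Z t t"
  using ineq unfolding Z_def phi_def by (simp add: mult.assoc)

lemma u_level_le_Z:
  assumes "0 \<le> t" "t \<le> T"
  shows "u (\<alpha> t) powr n \<le> Z T t"
proof -
  have a: "0 \<le> \<alpha> t" "\<alpha> t \<le> t" using assms \<alpha>_nonneg \<alpha>_le by auto
  have "u (\<alpha> t) powr n \<le> Z (\<alpha> t) (\<alpha> t)" using hypothesis_Z a by simp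
  also have "\<dots> \<le> Z T (\<alpha> t)" using Z_mono_horizon a assms by simp
  also have "\<dots> \<le> Z T t" using Z_mono_time a assms by simp
  finally show ?thesis .
qed

lemma integral_upto_alpha_deriv:
  assumes g: "continuous_on {0..} g" and t: "t \<in> {0..T}"
  shows "((\<lambda>t. integral {0..\<alpha> t} g) has_real_derivative g (\<alpha> t) * \<alpha>' t) (at t within {0..T})"
proof (rule integral_upper_chain[OF continuous_on_subset[OF g] _ t])
  show "\<alpha> ` {0..T} \<subseteq> {0..T}" using \<alpha>_nonneg \<alpha>_le by fastforce
  show "(\<alpha> has_real_derivative \<alpha>' t) (at t within {0..T})"
    by (rule DERIV_subset[OF \<alpha>_der]) (use t in auto)
qed auto

lemma comparison_estimate:
  assumes T: "T \<ge> 0"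
  shows "Psi n w x0 (G_closed x0 (Z T T)) \<le> Psi n w x0 (G_closed x0 c) + integral {0..\<alpha> T} (f T)"
proof -
  have Z_der: "(Z T has_real_derivative f T (\<alpha> t) * phi (\<alpha> t) * \<alpha>' t) (at t within {0..T})"
    if "t \<in> {0..T}" for t
    using DERIV_add[OF DERIV_const integral_upto_alpha_deriv[OF weighted_cont[OF T] that]]
    unfolding Z_def by simp
  have F_der: "((\<lambda>t. integral {0..\<alpha> t} (f T)) has_real_derivative f T (\<alpha> t) * \<alpha>' t)
                 (at t within {0..T})" if "t \<in> {0..T}" for t
    by (rule integral_upto_alpha_deriv[OF f_slice_cont[OF T] that])
  have Z_gt: "x0 < Z T t" if "t \<in> {0..T}" for t using Z_ge_c[OF T, of t] x0 that by simp
  have "Psi n w x0 (G_closed x0 (Z T T))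
        \<le> Psi n w x0 (G_closed x0 (Z T 0)) + integral {0..\<alpha> T} (f T) - integral {0..\<alpha> 0} (f T)"
  proof (rule comparison_via_antiderivative[OF T Z_der F_der])
    fix t assume "t \<in> {0..T}"
    thus "((\<lambda>z. Psi n w x0 (G_closed x0 z)) has_real_derivative
            1 / ((Z T t + 1) * ln (Z T t + 1) * w (Z T t powr (1 / n)))) (at (Z T t))"
      using Psi_G_closed_deriv[OF x0(1) w_pos w_cont Z_gt] by blast
  next
    fix t assume t: "t \<in> {0<..<T}"
    define z where "z = Z T t"
    have z: "0 < z" using Z_gt[of t] t x0 by (simp add: z_def)
    have "\<alpha>' t \<ge> 0"
      by (rule mono_on_deriv_nonneg[OF \<alpha>_mono _ \<alpha>_der]) (use t in auto)
    moreover have "f T (\<alpha> t) \<ge> 0" using T t \<alpha>_nonneg by (simp add: f_nonneg)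
    moreover have "phi (\<alpha> t) \<le> (z + 1) * ln (z + 1) * w (z powr (1 / n))"
      unfolding phi_def z_def
      by (rule integrand_le_level[OF n_pos w_mono w_nonneg u_nonneg u_level_le_Z])
         (use t \<alpha>_nonneg in auto)
    ultimately have "f T (\<alpha> t) * phi (\<alpha> t) * \<alpha>' t
                       \<le> f T (\<alpha> t) * ((z + 1) * ln (z + 1) * w (z powr (1 / n))) * \<alpha>' t"
      by (intro mult_left_mono mult_right_mono)
    moreover have "(z + 1) * ln (z + 1) * w (z powr (1 / n)) > 0"
      using z w_pos by simp
    ultimately show "1 / ((z + 1) * ln (z + 1) * w (z powr (1 / n)))
                       * (f T (\<alpha> t) * phi (\<alpha> t) * \<alpha>' t) \<le> f T (\<alpha> t) * \<alpha>' t"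
      unfolding z_def[symmetric] by (simp add: divide_le_eq mult.commute)
  qed
  moreover have "\<alpha> 0 = 0" using \<alpha>_nonneg[of 0] \<alpha>_le[of 0] by simp
  ultimately show ?thesis unfolding Z_def by simp
qed

lemma u_bound_from_level:
  assumes t: "t \<ge> 0" and x: "0 < x"
    and level: "Psi n w x0 x = Psi n w x0 (G_closed x0 c) + integral {0..\<alpha> t} (f t)"
  shows "u t \<le> Ginv x0 x powr (1 / n)"
proof -
  have Z_gt: "x0 < Z t t" using Z_ge_c[OF t t] x0(2) by linarith
  have "Psi n w x0 (G_closed x0 (Z t t)) \<le> Psi n w x0 x"
    using comparison_estimate[OF t] level by simp
  from bound_by_inverse[OF x0(1) w_pos w_cont Z_gt x this] have "Z t t \<le> Ginv x0 x" .
  thus ?thesis using powr_root_le[OF n_pos u_nonneg[OF t]] hypothesis_Z[OF t] by simp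
qed

lemma small_integral:
  assumes "\<delta> > 0"
  obtains \<tau> where "\<tau> > 0"
    "\<And>t. t \<in> {0..\<tau>} \<Longrightarrow> 0 \<le> integral {0..\<alpha> t} (f t) \<and> integral {0..\<alpha> t} (f t) < \<delta>"
proof -
  have "continuous_on {0..1} (f 1)" by (rule continuous_on_subset[OF f_slice_cont]) auto
  hence "\<exists>x\<in>{0..1}. \<forall>y\<in>{0..1}. f 1 y \<le> f 1 x" by (intro continuous_attains_sup) auto
  then obtain s_max where "s_max \<in> {0..1}" "\<And>s. s \<in> {0..1} \<Longrightarrow> f 1 s \<le> f 1 s_max"
    by blast
  define M where "M = f 1 s_max"
  have M: "\<And>s. s \<in> {0..1} \<Longrightarrow> f 1 s \<le> M" unfolding M_def by fact
  have M_nonneg: "M \<ge> 0" using M[of 0] f_nonneg[of 1 0] by simp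
  define \<tau> where "\<tau> = min 1 (\<delta> / (M + 1))"
  show ?thesis
  proof (rule that)
    show "\<tau> > 0" unfolding \<tau>_def using assms M_nonneg by simp
  next
    fix t assume t: "t \<in> {0..\<tau>}"
    hence t_le: "0 \<le> t" "t \<le> 1" "t \<le> \<delta> / (M + 1)" unfolding \<tau>_def by auto
    have a: "0 \<le> \<alpha> t" "\<alpha> t \<le> t" using \<alpha>_nonneg \<alpha>_le t_le by auto
    have int: "f t integrable_on {0..\<alpha> t}"
      by (rule integrable_continuous_interval, rule continuous_on_subset[OF f_slice_cont])
         (use t_le in auto)
    have "integral {0..\<alpha> t} (f t) \<le> integral {0..\<alpha> t} (\<lambda>s. M)"
    proof (rule integral_le[OF int])
      fix s assume s: "s \<in> {0..\<alpha> t}"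
      hence "f t s \<le> f 1 s" using a t_le by (intro f_mono) auto
      thus "f t s \<le> M" using M[of s] s a t_le by auto
    qed (intro integrable_continuous_interval continuous_on_const)
    also have "\<dots> = M * \<alpha> t" using a by simp
    also have "\<dots> \<le> M * (\<delta> / (M + 1))" using a t_le M_nonneg by (intro mult_left_mono) auto
    also have "\<dots> < \<delta>" using M_nonneg assms by (simp add: field_simps)
    finally show "0 \<le> integral {0..\<alpha> t} (f t) \<and> integral {0..\<alpha> t} (f t) < \<delta>"
      using integral_nonneg[OF int] f_nonneg t_le by auto
  qed
qed

end

theorem corollary2:
  fixes n c x0 :: real
    and f :: "real \<Rightarrow> real \<Rightarrow> real"
    and w \<alpha> u :: "real \<Rightarrow> real"
  assumes n_pos: "n > 0" and c_pos: "c > 0"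
    and x0: "0 < x0" "x0 < c"
    and f_cont: "continuous_on ({0..} \<times> {0..}) (\<lambda>(t, s). f t s)"
    and f_nonneg: "\<And>t s. t \<ge> 0 \<Longrightarrow> s \<ge> 0 \<Longrightarrow> f t s \<ge> 0"
    and f_mono: "\<And>s t1 t2. s \<ge> 0 \<Longrightarrow> 0 \<le> t1 \<Longrightarrow> t1 \<le> t2 \<Longrightarrow> f t1 s \<le> f t2 s"
    and w_cont: "continuous_on {0..} w"
    and w_nonneg: "\<And>x. x \<ge> 0 \<Longrightarrow> w x \<ge> 0"
    and w_mono: "mono_on {0..} w"
    and w_pos: "\<And>x. x > 0 \<Longrightarrow> w x > 0"
    and \<alpha>_C1: "\<exists>\<alpha>'. continuous_on {0..} \<alpha>' \<and>
                 (\<forall>t\<ge>0. (\<alpha> has_real_derivative \<alpha>' t) (at t within {0..}))"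
    and \<alpha>_nonneg: "\<And>t. t \<ge> 0 \<Longrightarrow> \<alpha> t \<ge> 0"
    and \<alpha>_mono: "mono_on {0..} \<alpha>"
    and \<alpha>_le: "\<And>t. t \<ge> 0 \<Longrightarrow> \<alpha> t \<le> t"
    and u_cont: "continuous_on {0..} u"
    and u_nonneg: "\<And>t. t \<ge> 0 \<Longrightarrow> u t \<ge> 0"
    and ineq: "\<And>t. t \<ge> 0 \<Longrightarrow> u t powr n \<le> c + integral {0..\<alpha> t}
                 (\<lambda>s. f t s * (u s powr n + 1) * ln (u s powr n + 1) * w (u s))"
  shows "\<exists>\<tau>>0. \<forall>t\<in>{0..\<tau>}.
           Psi n w x0 (G x0 c) + integral {0..\<alpha> t} (\<lambda>s. f t s) \<in> Psi n w x0 ` {0<..} \<and>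
           u t \<le> (Ginv x0 (Psi_inv n w x0 (Psi n w x0 (G x0 c) + integral {0..\<alpha> t} (\<lambda>s. f t s))))
                    powr (1 / n)"
proof -
  obtain \<alpha>' where \<alpha>'_der: "\<And>t. t \<ge> 0 \<Longrightarrow> (\<alpha> has_real_derivative \<alpha>' t) (at t within {0..})"
    using \<alpha>_C1 by blast
  interpret bihari_setting n c x0 f w \<alpha> \<alpha>' u
    by unfold_locales (fact assms \<alpha>'_der)+
  define g0 where "g0 = G_closed x0 c"
  have g0: "0 < g0" "G x0 c = g0"
    unfolding g0_def using x0 by (auto intro: G_closed_pos G_eq_G_closed)
  define \<delta> where "\<delta> = Psi n w x0 (g0 + 1) - Psi n w x0 g0"
  have "\<delta> > 0" unfolding \<delta>_def using Psi_strict_mono[OF x0(1) w_pos w_cont g0(1)] by simp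
  then obtain \<tau> where \<tau>: "\<tau> > 0"
    and small: "\<And>t. t \<in> {0..\<tau>} \<Longrightarrow> 0 \<le> integral {0..\<alpha> t} (f t) \<and> integral {0..\<alpha> t} (f t) < \<delta>"
    using small_integral by blast
  have "Psi n w x0 g0 + integral {0..\<alpha> t} (f t) \<in> Psi n w x0 ` {0<..} \<and>
        u t \<le> (Ginv x0 (Psi_inv n w x0 (Psi n w x0 g0 + integral {0..\<alpha> t} (f t)))) powr (1 / n)"
    if t: "t \<in> {0..\<tau>}" for t
  proof -
    obtain x where x: "0 < x" "Psi n w x0 x = Psi n w x0 g0 + integral {0..\<alpha> t} (f t)"
      using Psi_level_reached[OF x0(1) w_pos w_cont g0(1)] small[OF t] unfolding \<delta>_def by blast
    have "u t \<le> Ginv x0 x powr (1 / n)"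
      using u_bound_from_level[of t x] t x unfolding g0_def by simp
    moreover have "Psi_inv n w x0 (Psi n w x0 x) = x" by (rule Psi_inv_Psi[OF x0(1) w_pos w_cont x(1)])
    moreover have "Psi n w x0 x \<in> Psi n w x0 ` {0<..}" using x(1) by simp
    ultimately show ?thesis unfolding x(2)[symmetric] by simp
  qed
  with \<tau> g0(2) show ?thesis by auto
qed

end
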